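(* Let $\mathcal{A}$ be a finite or countable alphabet, $\mathcal{M}$ a countable set of probability measures on $\mathcal{A}^\infty$, $w:\mathcal{M}\to(0,1]$ a prior with $\sum_\nu w_\nu=1$, $\xi$ the Bayes mixture and $\mu\in\mathcal{M}$. If $\mathrm{Ent}(w)<\infty$, then $\mathbb{E}_\mu C_\infty\le \mathrm{Ent}(w)/w_\mu$ and $\lim_{t\to\infty}c_t=0$ with $\mu$-probability $1$.
   Context: $\mathcal{A}^\infty$ carries the $\sigma$-algebra generated by cylinders $\Gamma_x=\{x\omega\}$; for a measure $\rho$, $\rho(x):=\rho(\Gamma_x)$, $\rho(y|x):=\rho(xy)/\rho(x)$. Bayes mixture: $\xi(A):=\sum_{\nu\in\mathcal{M}}w_\nu\nu(A)$; posterior $w_\nu(x):=w_\nu\nu(x)/\xi(x)$. Entropy $\mathrm{Ent}(w):=-\sum_\nu w_\nu\ln w_\nu$ (natural logs). For a finite string $x$ and $\nu\in\mathcal{M}$, $d_x(\nu,\xi):=\sum_{a\in\mathcal{A}}\nu(a|x)\ln\frac{\nu(a|x)}{\xi(a|x)}$. For $\omega\in\mathcal{A}^\infty$, $c_t(\omega):=\sum_{\nu\in\mathcal{M}}w_\nu(\omega_{<t})\,d_{\omega_{<t}}(\nu,\xi)$ where $\omega_{<t}=\omega_1\cdots\omega_{t-1}$, and $C_\infty:=\sum_{t=1}^\infty c_t$. $\mathbb{E}_\mu$ denotes expectation w.r.t. $\mu$. *)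

theory Defs
  imports "HOL-Probability.Probability"
begin

text \<open>Sequences over the alphabet 'a (type of class countable: finite or countably infinite)
are streams; the cylinder of a finite string x is the set of streams starting with x.\<close>

definition cyl :: "'a list \<Rightarrow> 'a stream set" where
  "cyl x = {\<omega>. stake (length x) \<omega> = x}"

definition mcyl :: "'a stream measure \<Rightarrow> 'a list \<Rightarrow> real" where
  "mcyl \<rho> x = measure \<rho> (cyl x)"

definition mcond :: "'a stream measure \<Rightarrow> 'a list \<Rightarrow> 'a list \<Rightarrow> real" where
  "mcond \<rho> y x = mcyl \<rho> (x @ y) / mcyl \<rho> x"

definition xi :: "'a stream measure set \<Rightarrow> ('a stream measure \<Rightarrow> real) \<Rightarrow> 'a list \<Rightarrow> real" where
  "xi M w x = (\<Sum>\<^sub>\<infinity>\<nu>\<in>M. w \<nu> * mcyl \<nu> x)"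

definition xi_cond :: "'a stream measure set \<Rightarrow> ('a stream measure \<Rightarrow> real) \<Rightarrow> 'a list \<Rightarrow> 'a list \<Rightarrow> real" where
  "xi_cond M w y x = xi M w (x @ y) / xi M w x"

definition post :: "'a stream measure set \<Rightarrow> ('a stream measure \<Rightarrow> real) \<Rightarrow> 'a stream measure \<Rightarrow> 'a list \<Rightarrow> real" where
  "post M w \<nu> x = w \<nu> * mcyl \<nu> x / xi M w x"

definition Ent :: "'a stream measure set \<Rightarrow> ('a stream measure \<Rightarrow> real) \<Rightarrow> real" where
  "Ent M w = (\<Sum>\<^sub>\<infinity>\<nu>\<in>M. - (w \<nu> * ln (w \<nu>)))"

text \<open>d_x(nu,xi) = sum_a nu(a|x) ln (nu(a|x)/xi(a|x)) (terms with nu(a|x)=0 are 0)\<close>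
definition dKL :: "'a stream measure set \<Rightarrow> ('a stream measure \<Rightarrow> real) \<Rightarrow> 'a list \<Rightarrow> 'a stream measure \<Rightarrow> real" where
  "dKL M w x \<nu> = (\<Sum>\<^sub>\<infinity>a\<in>UNIV. mcond \<nu> [a] x * ln (mcond \<nu> [a] x / xi_cond M w [a] x))"

text \<open>c_t(omega) = sum_nu w_nu(omega_{<t}) d_{omega_{<t}}(nu,xi), t >= 1 (nonnegative terms; sum in ennreal)\<close>
definition ct :: "'a stream measure set \<Rightarrow> ('a stream measure \<Rightarrow> real) \<Rightarrow> nat \<Rightarrow> 'a stream \<Rightarrow> ennreal" where
  "ct M w t \<omega> = (\<integral>\<^sup>+ \<nu>. ennreal (post M w \<nu> (stake (t - 1) \<omega>) * dKL M w (stake (t - 1) \<omega>) \<nu>) \<partial>count_space M)"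

definition Cinf :: "'a stream measure set \<Rightarrow> ('a stream measure \<Rightarrow> real) \<Rightarrow> 'a stream \<Rightarrow> ennreal" where
  "Cinf M w \<omega> = (\<Sum>t. ct M w (Suc t) \<omega>)"

end

theory Submission
  imports Defs
begin

text \<open>Write \<open>D\<^sub>n(\<nu>)\<close> for the Kullback-Leibler divergence of \<open>\<xi>\<close> from \<open>\<nu>\<close> on strings of
  length \<open>n\<close>. By the chain rule, \<open>D\<^sub>n\<^sub>+\<^sub>1(\<nu>) - D\<^sub>n(\<nu>) = \<Sum>\<^sub>|\<^sub>x\<^sub>|\<^sub>=\<^sub>n \<nu>(x) d\<^sub>x(\<nu>,\<xi>) \<ge> 0\<close>, and dominance
  \<open>\<xi> \<ge> w\<^sub>\<nu> \<nu>\<close> gives \<open>D\<^sub>n(\<nu>) \<le> -ln w\<^sub>\<nu>\<close>. Since also \<open>\<mu>(x) \<le> \<xi>(x)/w\<^sub>\<mu>\<close>,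
  \<open>\<EE>\<^sub>\<mu> c\<^sub>n\<^sub>+\<^sub>1 = \<Sum>\<^sub>|\<^sub>x\<^sub>|\<^sub>=\<^sub>n \<mu>(x) \<Sum>\<^sub>\<nu> w\<^sub>\<nu> \<nu>(x) d\<^sub>x(\<nu>,\<xi>) / \<xi>(x) \<le> \<Sum>\<^sub>\<nu> (w\<^sub>\<nu>/w\<^sub>\<mu>) (D\<^sub>n\<^sub>+\<^sub>1(\<nu>) - D\<^sub>n(\<nu>))\<close>.
  Summing over \<open>n\<close> telescopes to \<open>\<EE>\<^sub>\<mu> C\<^sub>\<infinity> \<le> \<Sum>\<^sub>\<nu> (w\<^sub>\<nu>/w\<^sub>\<mu>)(-ln w\<^sub>\<nu>) = Ent(w)/w\<^sub>\<mu>\<close>.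
  Hence \<open>C\<^sub>\<infinity>\<close> is finite \<open>\<mu>\<close>-almost surely, and then its terms \<open>c\<^sub>t\<close> tend to \<open>0\<close>.\<close>

lemma has_sum_diff:
  fixes f g :: "'b \<Rightarrow> 'c::topological_ab_group_add"
  assumes "(f has_sum a) A" "(g has_sum b) A"
  shows "((\<lambda>x. f x - g x) has_sum (a - b)) A"
proof -
  have "((\<lambda>x. - g x) has_sum - b) A" using assms(2) has_sum_uminus by (metis minus_minus)
  from has_sum_add[OF assms(1) this] show ?thesis by simp
qed

lemma has_sum_of_nn_integral_count_space:
  fixes f :: "'b \<Rightarrow> real"
  assumes "\<And>x. x \<in> A \<Longrightarrow> 0 \<le> f x" "0 \<le> s"
    and "(\<integral>\<^sup>+x. ennreal (f x) \<partial>count_space A) = ennreal s"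
  shows "(f has_sum s) A"
proof -
  have "integrable (count_space A) f"
    by (rule integrableI_nonneg) (use assms in auto)
  hence abs: "Infinite_Set_Sum.abs_summable_on f A" by (simp add: abs_summable_on_def)
  have "infsetsum f A = s"
    using infsetsum_conv_nn_integral[of A f] assms by auto
  moreover have "f summable_on A"
    using abs abs_summable_equivalent abs_summable_summable by blast
  ultimately show ?thesis by (metis has_sum_infsum infsetsum_infsum[OF abs])
qed

lemma nn_integral_count_space_has_sum:
  fixes f :: "'b \<Rightarrow> real"
  assumes "(f has_sum s) A" "\<And>x. x \<in> A \<Longrightarrow> 0 \<le> f x"
  shows "(\<integral>\<^sup>+x. ennreal (f x) \<partial>count_space A) = ennreal s"
proof -
  have "(\<lambda>x. norm (f x)) summable_on A"
    using assms by (metis (mono_tags, lifting) has_sum_cong has_sum_imp_summable real_norm_def abs_of_nonneg)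
  hence abs: "Infinite_Set_Sum.abs_summable_on f A" using abs_summable_equivalent by blast
  show ?thesis
    using nn_integral_conv_infsetsum[OF abs] assms infsetsum_infsum[OF abs] infsumI[OF assms(1)] by auto
qed

lemma (in finite_measure) has_sum_measure_UN:
  assumes "countable I" "\<And>i. i \<in> I \<Longrightarrow> X i \<in> sets M" "disjoint_family_on X I"
  shows "((\<lambda>i. measure M (X i)) has_sum measure M (\<Union>(X ` I))) I"
proof (rule has_sum_of_nn_integral_count_space)
  have "emeasure M (\<Union>(X ` I)) = (\<integral>\<^sup>+i. emeasure M (X i) \<partial>count_space I)"
    by (rule emeasure_UN_countable) (use assms in auto)
  thus "(\<integral>\<^sup>+i. ennreal (measure M (X i)) \<partial>count_space I) = ennreal (measure M (\<Union>(X ` I)))"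
    by (simp add: emeasure_eq_measure)
qed auto

lemma diff_le_mult_ln_div:
  fixes p q :: real
  assumes "0 < p" "0 < q"
  shows "p - q \<le> p * ln (p / q)"
proof -
  have "ln (q / p) \<le> q / p - 1" using assms by (intro ln_le_minus_one) simp
  hence "p * (- ln (p / q)) \<le> p * (q / p - 1)"
    using assms by (intro mult_left_mono) (auto simp: ln_div)
  moreover have "p * (q / p - 1) = q - p" using assms by (simp add: field_simps)
  ultimately show ?thesis by linarith
qed

lemma suminf_ennreal_telescope_le:
  fixes D :: "nat \<Rightarrow> real"
  assumes "0 \<le> c" "D 0 = 0" "\<And>n. D n \<le> B" "\<And>n. D n \<le> D (Suc n)"
  shows "(\<Sum>n. ennreal (c * (D (Suc n) - D n))) \<le> ennreal (c * B)"
proof (rule suminf_le_const[OF summableI])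
  fix n
  have "(\<Sum>t<n. ennreal (c * (D (Suc t) - D t))) = ennreal (\<Sum>t<n. c * (D (Suc t) - D t))"
    using assms by (intro sum_ennreal) auto
  also have "(\<Sum>t<n. c * (D (Suc t) - D t)) = c * D n"
    using sum_lessThan_telescope[of D n] assms(2) by (simp flip: sum_distrib_left)
  finally show "(\<Sum>t<n. ennreal (c * (D (Suc t) - D t))) \<le> ennreal (c * B)"
    using assms by (simp add: ennreal_leI mult_left_mono)
qed

lemma ennreal_suminf_finite_imp_LIMSEQ_zero:
  fixes f :: "nat \<Rightarrow> ennreal"
  assumes "suminf f \<noteq> \<infinity>"
  shows "f \<longlonglongrightarrow> 0"
proof -
  have "f i \<noteq> \<infinity>" for i
    using ennreal_suminf_lessD[of f top i] assms by (simp add: top.not_eq_extremum)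
  hence f_eq: "f = (\<lambda>i. ennreal (enn2real (f i)))" by (auto simp: fun_eq_iff ennreal_enn2real_if)
  have "summable (\<lambda>i. enn2real (f i))"
    using assms by (subst (asm) f_eq) (auto intro: summable_suminf_not_top)
  hence "(\<lambda>i. ennreal (enn2real (f i))) \<longlonglongrightarrow> ennreal 0"
    by (intro tendsto_ennrealI summable_LIMSEQ_zero)
  thus ?thesis by (subst f_eq) simp
qed

lemma cyl_eq_UN_snoc: "cyl x = (\<Union>a. cyl (x @ [a]))"
  by (auto simp del: stake.simps simp: cyl_def stake_Suc)

lemma disjoint_family_cyl_snoc: "disjoint_family (\<lambda>a. cyl (x @ [a]))"
  by (auto simp: disjoint_family_on_def cyl_def stake_Suc)

lemma cyl_append_subset: "cyl (x @ y) \<subseteq> cyl x"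
  by (auto simp: cyl_def) (metis append_eq_conv_conj length_stake stake_add take_add)

lemma UN_cyl_length: "(\<Union>x\<in>{x::'a list. length x = n}. cyl x) = UNIV"
  by (auto simp: cyl_def)

lemma disjoint_family_on_cyl_length: "disjoint_family_on cyl {x::'a list. length x = n}"
  by (auto simp: disjoint_family_on_def cyl_def)

lemma countable_lists_length: "countable {x :: 'a::countable list. length x = n}"
  by (rule countable_subset[of _ UNIV]) auto

lemma stake_eq_set_eq: "{\<omega>. stake n \<omega> = x} = (if length x = n then cyl x else {})"
  by (auto simp: cyl_def)

lemma mcyl_nonneg: "0 \<le> mcyl \<nu> x"
  by (simp add: mcyl_def)

locale bayes_mixture =
  fixes M :: "('a::countable) stream measure set" and w :: "'a stream measure \<Rightarrow> real"
  assumes countM: "countable M"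
    and probM: "\<And>\<nu>. \<nu> \<in> M \<Longrightarrow> prob_space \<nu>"
    and setsM: "\<And>\<nu>. \<nu> \<in> M \<Longrightarrow> sets \<nu> = sets (stream_space (count_space UNIV))"
    and wpos: "\<And>\<nu>. \<nu> \<in> M \<Longrightarrow> 0 < w \<nu> \<and> w \<nu> \<le> 1"
    and wsum: "(w has_sum 1) M"
begin

lemma space_model: "\<nu> \<in> M \<Longrightarrow> space \<nu> = UNIV"
  using sets_eq_imp_space_eq[OF setsM] by (simp add: space_stream_space)

lemma stake_measurable: "\<nu> \<in> M \<Longrightarrow> stake n \<in> measurable \<nu> (count_space UNIV)"
  using measurable_stake measurable_cong_sets[OF setsM refl] by blast

lemma sets_stake_eq: "\<nu> \<in> M \<Longrightarrow> {\<omega>. stake n \<omega> = x} \<in> sets \<nu>"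
proof -
  assume \<nu>: "\<nu> \<in> M"
  have "{\<omega>. stake n \<omega> = x} = stake n -` {x} \<inter> space \<nu>" using space_model[OF \<nu>] by auto
  thus ?thesis using measurable_sets[OF stake_measurable[OF \<nu>]] by simp
qed

lemma sets_cyl: "\<nu> \<in> M \<Longrightarrow> cyl x \<in> sets \<nu>"
  using sets_stake_eq[where n = "length x" and x = x] by (simp add: stake_eq_set_eq)

lemma w_nonneg: "\<nu> \<in> M \<Longrightarrow> 0 \<le> w \<nu>"
  using wpos by fastforce

lemma neg_ln_w_nonneg: "\<nu> \<in> M \<Longrightarrow> 0 \<le> - ln (w \<nu>)"
  using wpos by simp

lemma mcyl_le_1: "\<nu> \<in> M \<Longrightarrow> mcyl \<nu> x \<le> 1"
  unfolding mcyl_def using probM prob_space.prob_le_1 by blast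

lemma mcyl_Nil: "\<nu> \<in> M \<Longrightarrow> mcyl \<nu> [] = 1"
  using prob_space.prob_space[OF probM] space_model by (simp add: mcyl_def cyl_def)

lemma mcyl_append_le: "\<nu> \<in> M \<Longrightarrow> mcyl \<nu> (x @ y) \<le> mcyl \<nu> x"
  unfolding mcyl_def
  by (rule finite_measure.finite_measure_mono[OF prob_space.axioms(1)[OF probM] cyl_append_subset sets_cyl])

lemma mcyl_has_sum_snoc: "\<nu> \<in> M \<Longrightarrow> ((\<lambda>a. mcyl \<nu> (x @ [a])) has_sum mcyl \<nu> x) UNIV"
  using finite_measure.has_sum_measure_UN[OF prob_space.axioms(1)[OF probM],
      of \<nu> UNIV "\<lambda>a. cyl (x @ [a])"] cyl_eq_UN_snoc[of x] disjoint_family_cyl_snoc[of x] sets_cyl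
  unfolding mcyl_def by simp

lemma mcyl_has_sum_length:
  assumes \<nu>: "\<nu> \<in> M"
  shows "(mcyl \<nu> has_sum 1) {x. length x = n}"
proof -
  have "measure \<nu> (\<Union>(cyl ` {x. length x = n})) = 1"
    using prob_space.prob_space[OF probM[OF \<nu>]] by (simp add: UN_cyl_length space_model[OF \<nu>])
  moreover have "((\<lambda>x. measure \<nu> (cyl x)) has_sum measure \<nu> (\<Union>(cyl ` {x. length x = n})))
      {x. length x = n}"
    by (rule finite_measure.has_sum_measure_UN[OF prob_space.axioms(1)[OF probM[OF \<nu>]]
        countable_lists_length sets_cyl[OF \<nu>] disjoint_family_on_cyl_length])
  ultimately show ?thesis by (simp add: mcyl_def[abs_def])
qed

lemma weighted_mcyl_nonneg: "\<nu> \<in> M \<Longrightarrow> 0 \<le> w \<nu> * mcyl \<nu> x"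
  by (simp add: w_nonneg mcyl_nonneg)

lemma xi_has_sum: "((\<lambda>\<nu>. w \<nu> * mcyl \<nu> x) has_sum xi M w x) M"
proof -
  have "(\<lambda>\<nu>. w \<nu> * mcyl \<nu> x) summable_on M"
    by (rule summable_on_comparison_test[OF has_sum_imp_summable[OF wsum]])
       (use wpos mcyl_le_1 weighted_mcyl_nonneg in \<open>auto intro: mult_left_le\<close>)
  thus ?thesis unfolding xi_def by (rule has_sum_infsum)
qed

lemma xi_nonneg: "0 \<le> xi M w x"
  using has_sum_nonneg[OF xi_has_sum] weighted_mcyl_nonneg by blast

lemma weighted_mcyl_le_xi: "\<nu> \<in> M \<Longrightarrow> w \<nu> * mcyl \<nu> x \<le> xi M w x"
  using has_sum_mono_neutral[OF has_sum_finite[of "{\<nu>}" "\<lambda>\<nu>. w \<nu> * mcyl \<nu> x"] xi_has_sum]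
    weighted_mcyl_nonneg by auto

lemma xi_pos: "\<nu> \<in> M \<Longrightarrow> 0 < mcyl \<nu> x \<Longrightarrow> 0 < xi M w x"
  using weighted_mcyl_le_xi[of \<nu> x] wpos[of \<nu>] by (smt (verit) mult_pos_pos)

lemma xi_Nil: "xi M w [] = 1"
  using has_sum_unique[OF xi_has_sum[of "[]"]] wsum by (simp add: mcyl_Nil cong: has_sum_cong)

lemma xi_has_sum_of_mcyl_has_sum:
  assumes I: "countable I" and h: "\<And>\<nu>. \<nu> \<in> M \<Longrightarrow> ((\<lambda>i. mcyl \<nu> (h i)) has_sum mcyl \<nu> y) I"
  shows "((\<lambda>i. xi M w (h i)) has_sum xi M w y) I"
proof (rule has_sum_of_nn_integral_count_space)
  have "(\<integral>\<^sup>+i. ennreal (xi M w (h i)) \<partial>count_space I)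
      = (\<integral>\<^sup>+i. \<integral>\<^sup>+\<nu>. ennreal (w \<nu> * mcyl \<nu> (h i)) \<partial>count_space M \<partial>count_space I)"
    by (rule nn_integral_cong, rule nn_integral_count_space_has_sum[OF xi_has_sum, symmetric])
       (use weighted_mcyl_nonneg in auto)
  also have "\<dots> = (\<integral>\<^sup>+\<nu>. \<integral>\<^sup>+i. ennreal (w \<nu> * mcyl \<nu> (h i)) \<partial>count_space I \<partial>count_space M)"
    by (rule nn_integral_count_space_nn_integral[OF countM]) simp
  also have "\<dots> = (\<integral>\<^sup>+\<nu>. ennreal (w \<nu> * mcyl \<nu> y) \<partial>count_space M)"
  proof (rule nn_integral_cong)
    fix \<nu> assume "\<nu> \<in> space (count_space M)"
    hence \<nu>: "\<nu> \<in> M" by simp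
    have "((\<lambda>i. w \<nu> * mcyl \<nu> (h i)) has_sum w \<nu> * mcyl \<nu> y) I"
      by (rule has_sum_cmult_right[OF h[OF \<nu>]])
    thus "(\<integral>\<^sup>+i. ennreal (w \<nu> * mcyl \<nu> (h i)) \<partial>count_space I) = ennreal (w \<nu> * mcyl \<nu> y)"
      by (rule nn_integral_count_space_has_sum) (simp add: weighted_mcyl_nonneg[OF \<nu>])
  qed
  also have "\<dots> = ennreal (xi M w y)"
    by (rule nn_integral_count_space_has_sum[OF xi_has_sum]) (use weighted_mcyl_nonneg in auto)
  finally show "(\<integral>\<^sup>+i. ennreal (xi M w (h i)) \<partial>count_space I) = ennreal (xi M w y)" .
qed (auto simp: xi_nonneg)

lemma xi_has_sum_snoc: "((\<lambda>a. xi M w (x @ [a])) has_sum xi M w x) UNIV"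
  by (rule xi_has_sum_of_mcyl_has_sum) (auto intro: mcyl_has_sum_snoc)

lemma xi_has_sum_length: "(xi M w has_sum 1) {x. length x = n}"
  using xi_has_sum_of_mcyl_has_sum[OF countable_lists_length, where h = "\<lambda>x. x" and y = "[]"]
  by (simp add: mcyl_Nil mcyl_has_sum_length xi_Nil)

definition kl_term :: "'a stream measure \<Rightarrow> 'a list \<Rightarrow> real" where
  "kl_term \<nu> y = mcyl \<nu> y * ln (mcyl \<nu> y / xi M w y)"

definition kl_divergence :: "'a stream measure \<Rightarrow> nat \<Rightarrow> real" where
  "kl_divergence \<nu> n = (\<Sum>\<^sub>\<infinity>y\<in>{y. length y = n}. kl_term \<nu> y)"

lemma kl_term_bounds:
  assumes \<nu>: "\<nu> \<in> M"
  shows "- xi M w y \<le> kl_term \<nu> y \<and> kl_term \<nu> y \<le> mcyl \<nu> y * (- ln (w \<nu>))"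
proof (cases "mcyl \<nu> y = 0")
  case True
  thus ?thesis using xi_nonneg neg_ln_w_nonneg[OF \<nu>] by (simp add: kl_term_def)
next
  case False
  define m z where "m = mcyl \<nu> y" and "z = xi M w y"
  have m0: "0 < m" using False mcyl_nonneg m_def by (metis less_eq_real_def)
  have z0: "0 < z" using xi_pos[OF \<nu> m0[unfolded m_def]] z_def by simp
  have w0: "0 < w \<nu>" using wpos[OF \<nu>] by simp
  have "m / z \<le> 1 / w \<nu>"
    using weighted_mcyl_le_xi[OF \<nu>, of y] w0 z0 by (simp add: m_def z_def field_simps)
  hence "ln (m / z) \<le> - ln (w \<nu>)"
    using m0 z0 w0 by (simp add: ln_div flip: ln_le_cancel_iff)
  hence "m * ln (m / z) \<le> m * (- ln (w \<nu>))" using m0 by (intro mult_left_mono) auto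
  moreover have "- z \<le> m * ln (m / z)" using diff_le_mult_ln_div[OF m0 z0] m0 by linarith
  ultimately show ?thesis by (simp add: kl_term_def m_def z_def)
qed

lemma kl_term_summable:
  assumes \<nu>: "\<nu> \<in> M" and hm: "((\<lambda>i. mcyl \<nu> (h i)) has_sum a) I"
    and hx: "((\<lambda>i. xi M w (h i)) has_sum b) I"
  shows "(\<lambda>i. kl_term \<nu> (h i)) summable_on I"
proof -
  have "(\<lambda>i. xi M w (h i) + mcyl \<nu> (h i) * (- ln (w \<nu>))) summable_on I"
    using has_sum_add[OF hx has_sum_cmult_left[OF hm]] by (rule has_sum_imp_summable)
  hence "(\<lambda>i. norm (kl_term \<nu> (h i))) summable_on I"
  proof (rule summable_on_comparison_test)
    fix i
    show "norm (kl_term \<nu> (h i)) \<le> xi M w (h i) + mcyl \<nu> (h i) * (- ln (w \<nu>))"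
      using kl_term_bounds[OF \<nu>, of "h i"] xi_nonneg[of "h i"]
        mult_nonneg_nonneg[OF mcyl_nonneg[of \<nu> "h i"] neg_ln_w_nonneg[OF \<nu>]]
      unfolding real_norm_def abs_le_iff by linarith
  qed simp
  thus ?thesis by (rule Infinite_Sum.abs_summable_summable)
qed

lemma kl_term_summable_snoc: "\<nu> \<in> M \<Longrightarrow> (\<lambda>a. kl_term \<nu> (x @ [a])) summable_on UNIV"
  by (rule kl_term_summable[OF _ mcyl_has_sum_snoc xi_has_sum_snoc])

lemma kl_term_summable_length: "\<nu> \<in> M \<Longrightarrow> kl_term \<nu> summable_on {x. length x = n}"
  using kl_term_summable[of \<nu> "\<lambda>x. x", OF _ mcyl_has_sum_length xi_has_sum_length] by simp

lemma mcond_ln_ratio_eq: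
  assumes \<nu>: "\<nu> \<in> M" and m0: "0 < mcyl \<nu> x"
  shows "mcond \<nu> [a] x * ln (mcond \<nu> [a] x / xi_cond M w [a] x)
       = (kl_term \<nu> (x @ [a]) - mcyl \<nu> (x @ [a]) * ln (mcyl \<nu> x / xi M w x)) / mcyl \<nu> x"
proof (cases "mcyl \<nu> (x @ [a]) = 0")
  case True
  thus ?thesis by (simp add: mcond_def kl_term_def)
next
  case False
  define m z ma za where "m = mcyl \<nu> x" and "z = xi M w x"
    and "ma = mcyl \<nu> (x @ [a])" and "za = xi M w (x @ [a])"
  have ma0: "0 < ma" using False mcyl_nonneg ma_def by (metis less_eq_real_def)
  have pos: "0 < m" "0 < z" "0 < ma" "0 < za"
    using m0 ma0 xi_pos[OF \<nu>] by (auto simp: m_def z_def ma_def za_def)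
  have "(ma / m) / (za / z) = (ma / za) / (m / z)" by (simp add: field_simps)
  hence L: "ln ((ma / m) / (za / z)) = ln (ma / za) - ln (m / z)"
    using pos by (simp add: ln_div ln_mult)
  have "(ma / m) * ln ((ma / m) / (za / z)) = (ma * ln (ma / za) - ma * ln (m / z)) / m"
    unfolding L using pos by (simp add: field_simps)
  thus ?thesis by (simp add: mcond_def xi_cond_def kl_term_def ma_def za_def m_def z_def)
qed

text \<open>The chain rule for relative entropy: \<open>\<nu>(x) d\<^sub>x(\<nu>,\<xi>)\<close> is what the one-step extension
  of \<open>x\<close> adds to the divergence.\<close>

lemma mcyl_mult_dKL_has_sum:
  assumes \<nu>: "\<nu> \<in> M"
  shows "((\<lambda>a. kl_term \<nu> (x @ [a]) - mcyl \<nu> (x @ [a]) * ln (mcyl \<nu> x / xi M w x))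
           has_sum mcyl \<nu> x * dKL M w x \<nu>) UNIV"
proof (cases "mcyl \<nu> x = 0")
  case True
  hence "mcyl \<nu> (x @ [a]) = 0" for a
    using mcyl_append_le[OF \<nu>, of x "[a]"] mcyl_nonneg[of \<nu> "x @ [a]"] by simp
  thus ?thesis using True by (simp add: kl_term_def)
next
  case False
  hence m0: "0 < mcyl \<nu> x" using mcyl_nonneg less_eq_real_def by metis
  define S where "S = (\<Sum>\<^sub>\<infinity>a. kl_term \<nu> (x @ [a])) - mcyl \<nu> x * ln (mcyl \<nu> x / xi M w x)"
  have series: "((\<lambda>a. kl_term \<nu> (x @ [a]) - mcyl \<nu> (x @ [a]) * ln (mcyl \<nu> x / xi M w x)) has_sum S) UNIV"
    unfolding S_def
    by (rule has_sum_diff[OF has_sum_infsum[OF kl_term_summable_snoc[OF \<nu>]]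
          has_sum_cmult_left[OF mcyl_has_sum_snoc[OF \<nu>]]])
  have "((\<lambda>a. mcond \<nu> [a] x * ln (mcond \<nu> [a] x / xi_cond M w [a] x)) has_sum S / mcyl \<nu> x) UNIV"
    using has_sum_cmult_left[OF series, of "1 / mcyl \<nu> x"] by (simp add: mcond_ln_ratio_eq[OF \<nu> m0])
  hence "dKL M w x \<nu> = S / mcyl \<nu> x" unfolding dKL_def by (rule infsumI)
  thus ?thesis using series m0 by simp
qed

lemma mcyl_mult_dKL_eq:
  "\<nu> \<in> M \<Longrightarrow> mcyl \<nu> x * dKL M w x \<nu> = (\<Sum>\<^sub>\<infinity>a. kl_term \<nu> (x @ [a])) - kl_term \<nu> x"
  using has_sum_unique[OF mcyl_mult_dKL_has_sum
      has_sum_diff[OF has_sum_infsum[OF kl_term_summable_snoc] has_sum_cmult_left[OF mcyl_has_sum_snoc]]]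
  by (simp add: kl_term_def)

lemma mcyl_mult_dKL_nonneg:
  assumes \<nu>: "\<nu> \<in> M"
  shows "0 \<le> mcyl \<nu> x * dKL M w x \<nu>"
proof (cases "mcyl \<nu> x = 0")
  case True thus ?thesis by simp
next
  case False
  define m z where "m = mcyl \<nu> x" and "z = xi M w x"
  have m0: "0 < m" using False mcyl_nonneg m_def by (metis less_eq_real_def)
  have z0: "0 < z" using xi_pos[OF \<nu> m0[unfolded m_def]] z_def by simp
  have lower: "((\<lambda>a. mcyl \<nu> (x @ [a]) - xi M w (x @ [a]) * (m / z)) has_sum (m - z * (m / z))) UNIV"
    unfolding m_def z_def by (rule has_sum_diff[OF mcyl_has_sum_snoc[OF \<nu>] has_sum_cmult_left[OF xi_has_sum_snoc]])
  have "m - z * (m / z) \<le> mcyl \<nu> x * dKL M w x \<nu>"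
  proof (rule has_sum_mono[OF lower mcyl_mult_dKL_has_sum[OF \<nu>]])
    fix a
    define ma za where "ma = mcyl \<nu> (x @ [a])" and "za = xi M w (x @ [a])"
    show "mcyl \<nu> (x @ [a]) - xi M w (x @ [a]) * (m / z)
        \<le> kl_term \<nu> (x @ [a]) - mcyl \<nu> (x @ [a]) * ln (mcyl \<nu> x / xi M w x)"
    proof (cases "ma = 0")
      case True
      thus ?thesis using xi_nonneg[of "x @ [a]"] m0 z0 by (simp add: kl_term_def ma_def)
    next
      case False
      have ma0: "0 < ma" using False mcyl_nonneg ma_def by (metis less_eq_real_def)
      have za0: "0 < za" using xi_pos[OF \<nu> ma0[unfolded ma_def]] za_def by simp
      have "ma / (za * (m / z)) = (ma / za) / (m / z)" by simp
      hence "ma * ln (ma / (za * (m / z))) = ma * ln (ma / za) - ma * ln (m / z)"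
        using m0 z0 ma0 za0 by (simp add: ln_div ln_mult algebra_simps)
      thus ?thesis using diff_le_mult_ln_div[of ma "za * (m / z)"] m0 z0 ma0 za0
        by (simp add: kl_term_def ma_def za_def m_def z_def)
    qed
  qed
  thus ?thesis using z0 by simp
qed

lemma kl_divergence_0: "\<nu> \<in> M \<Longrightarrow> kl_divergence \<nu> 0 = 0"
  by (simp add: kl_divergence_def kl_term_def mcyl_Nil xi_Nil)

lemma kl_divergence_le:
  assumes \<nu>: "\<nu> \<in> M"
  shows "kl_divergence \<nu> n \<le> - ln (w \<nu>)"
  using has_sum_mono[OF has_sum_infsum[OF kl_term_summable_length[OF \<nu>]]
      has_sum_cmult_left[OF mcyl_has_sum_length[OF \<nu>]]] kl_term_bounds[OF \<nu>]
  by (simp add: kl_divergence_def)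

lemma snoc_bij_betw:
  "bij_betw (\<lambda>(x, a). x @ [a]) ({x::'b list. length x = n} \<times> UNIV) {x. length x = Suc n}"
  by (rule bij_betw_byWitness[where f' = "\<lambda>y. (butlast y, last y)"]) (auto simp: length_Suc_conv_rev)

lemma kl_divergence_Suc_has_sum:
  assumes \<nu>: "\<nu> \<in> M"
  shows "((\<lambda>x. mcyl \<nu> x * dKL M w x \<nu>) has_sum kl_divergence \<nu> (Suc n) - kl_divergence \<nu> n)
           {x. length x = n}"
proof -
  have "(kl_term \<nu> has_sum kl_divergence \<nu> (Suc n)) {x. length x = Suc n}"
    unfolding kl_divergence_def by (rule has_sum_infsum[OF kl_term_summable_length[OF \<nu>]])
  hence "((\<lambda>(x, a). kl_term \<nu> (x @ [a])) has_sum kl_divergence \<nu> (Suc n)) ({x. length x = n} \<times> UNIV)"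
    using has_sum_reindex_bij_betw[OF snoc_bij_betw, of "kl_term \<nu>"] by (simp add: case_prod_unfold)
  hence "((\<lambda>x. \<Sum>\<^sub>\<infinity>a. kl_term \<nu> (x @ [a])) has_sum kl_divergence \<nu> (Suc n)) {x. length x = n}"
    by (rule has_sum_SigmaD) (use has_sum_infsum[OF kl_term_summable_snoc[OF \<nu>]] in auto)
  from has_sum_diff[OF this has_sum_infsum[OF kl_term_summable_length[OF \<nu>]]] show ?thesis
    by (simp add: mcyl_mult_dKL_eq[OF \<nu>] kl_divergence_def)
qed

lemma kl_divergence_mono_Suc: "\<nu> \<in> M \<Longrightarrow> kl_divergence \<nu> n \<le> kl_divergence \<nu> (Suc n)"
  using has_sum_nonneg[OF kl_divergence_Suc_has_sum] mcyl_mult_dKL_nonneg by fastforce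

lemma nn_integral_stake:
  assumes \<nu>: "\<nu> \<in> M"
  shows "(\<integral>\<^sup>+\<omega>. f (stake n \<omega>) \<partial>\<nu>)
       = (\<integral>\<^sup>+x. f x * ennreal (mcyl \<nu> x) \<partial>count_space {x. length x = n})"
proof -
  have "(\<integral>\<^sup>+\<omega>. f (stake n \<omega>) \<partial>\<nu>)
      = (\<integral>\<^sup>+\<omega>. \<integral>\<^sup>+x. f x * indicator {\<omega>. stake n \<omega> = x} \<omega> \<partial>count_space UNIV \<partial>\<nu>)"
  proof (rule nn_integral_cong)
    fix \<omega>
    have "(\<integral>\<^sup>+x. f x * indicator {\<omega>. stake n \<omega> = x} \<omega> \<partial>count_space UNIV)
        = (\<integral>\<^sup>+x. f x * indicator {stake n \<omega>} x \<partial>count_space UNIV)"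
      by (rule nn_integral_cong) (auto simp: indicator_def)
    thus "f (stake n \<omega>) = (\<integral>\<^sup>+x. f x * indicator {\<omega>. stake n \<omega> = x} \<omega> \<partial>count_space UNIV)"
      by simp
  qed
  also have "\<dots> = (\<integral>\<^sup>+x. \<integral>\<^sup>+\<omega>. f x * indicator {\<omega>. stake n \<omega> = x} \<omega> \<partial>\<nu> \<partial>count_space UNIV)"
  proof (rule nn_integral_count_space_nn_integral)
    fix x :: "'a list"
    have [measurable]: "{\<omega>. stake n \<omega> = x} \<in> sets \<nu>" by (rule sets_stake_eq[OF \<nu>])
    show "(\<lambda>\<omega>. f x * indicator {\<omega>. stake n \<omega> = x} \<omega>) \<in> borel_measurable \<nu>" by measurable
  qed simp
  also have "\<dots> = (\<integral>\<^sup>+x. f x * ennreal (mcyl \<nu> x) * indicator {x. length x = n} x \<partial>count_space UNIV)"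
  proof (rule nn_integral_cong)
    fix x :: "'a list"
    have "(\<integral>\<^sup>+\<omega>. f x * indicator {\<omega>. stake n \<omega> = x} \<omega> \<partial>\<nu>) = f x * emeasure \<nu> {\<omega>. stake n \<omega> = x}"
      by (rule nn_integral_cmult_indicator[OF sets_stake_eq[OF \<nu>]])
    also have "emeasure \<nu> {\<omega>. stake n \<omega> = x} = ennreal (mcyl \<nu> x) * indicator {x. length x = n} x"
      using finite_measure.emeasure_eq_measure[OF prob_space.axioms(1)[OF probM[OF \<nu>]]]
      by (simp add: stake_eq_set_eq mcyl_def)
    finally show "(\<integral>\<^sup>+\<omega>. f x * indicator {\<omega>. stake n \<omega> = x} \<omega> \<partial>\<nu>)
        = f x * ennreal (mcyl \<nu> x) * indicator {x. length x = n} x"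
      by (simp add: mult.assoc)
  qed
  finally show ?thesis by (simp add: nn_integral_count_space_indicator)
qed

lemma ct_Suc_measurable:
  assumes \<mu>: "\<mu> \<in> M"
  shows "ct M w (Suc t) \<in> borel_measurable \<mu>"
proof -
  have "ct M w (Suc t)
      = (\<lambda>x. \<integral>\<^sup>+\<nu>. ennreal (post M w \<nu> x * dKL M w x \<nu>) \<partial>count_space M) \<circ> stake t"
    by (simp add: ct_def fun_eq_iff)
  also have "\<dots> \<in> borel_measurable \<mu>"
    by (rule measurable_comp[OF stake_measurable[OF \<mu>]]) simp
  finally show ?thesis .
qed

lemma Cinf_measurable: "\<mu> \<in> M \<Longrightarrow> Cinf M w \<in> borel_measurable \<mu>"
  unfolding Cinf_def[abs_def] by (intro borel_measurable_suminf_order ct_Suc_measurable)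

text \<open>Dominance \<open>w\<^sub>\<mu> \<mu>(x) \<le> \<xi>(x)\<close> cancels the normalisation of the posterior.\<close>

lemma posterior_dKL_mult_mcyl_le:
  assumes \<mu>: "\<mu> \<in> M"
  shows "(\<integral>\<^sup>+\<nu>. ennreal (post M w \<nu> x * dKL M w x \<nu>) \<partial>count_space M) * ennreal (mcyl \<mu> x)
       \<le> (\<integral>\<^sup>+\<nu>. ennreal (w \<nu> / w \<mu> * (mcyl \<nu> x * dKL M w x \<nu>)) \<partial>count_space M)"
proof -
  have "(\<integral>\<^sup>+\<nu>. ennreal (post M w \<nu> x * dKL M w x \<nu>) \<partial>count_space M) * ennreal (mcyl \<mu> x)
      = (\<integral>\<^sup>+\<nu>. ennreal (post M w \<nu> x * dKL M w x \<nu>) * ennreal (mcyl \<mu> x) \<partial>count_space M)"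
    by (simp add: nn_integral_multc)
  also have "\<dots> \<le> (\<integral>\<^sup>+\<nu>. ennreal (w \<nu> / w \<mu> * (mcyl \<nu> x * dKL M w x \<nu>)) \<partial>count_space M)"
  proof (rule nn_integral_mono)
    fix \<nu> assume "\<nu> \<in> space (count_space M)"
    hence \<nu>: "\<nu> \<in> M" by simp
    define d where "d = w \<nu> * (mcyl \<nu> x * dKL M w x \<nu>)"
    have d0: "0 \<le> d" using w_nonneg[OF \<nu>] mcyl_mult_dKL_nonneg[OF \<nu>] by (simp add: d_def)
    have w\<mu>: "0 < w \<mu>" using wpos[OF \<mu>] by simp
    have "d / xi M w x * mcyl \<mu> x \<le> d / w \<mu>"
    proof (cases "xi M w x = 0")
      case True thus ?thesis using d0 w\<mu> by simp
    next
      case False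
      hence "0 < xi M w x" using xi_nonneg less_eq_real_def by metis
      thus ?thesis
        using mult_left_mono[OF weighted_mcyl_le_xi[OF \<mu>, of x] d0] w\<mu> by (simp add: field_simps)
    qed
    moreover have "post M w \<nu> x * dKL M w x \<nu> = d / xi M w x" by (simp add: post_def d_def)
    ultimately show "ennreal (post M w \<nu> x * dKL M w x \<nu>) * ennreal (mcyl \<mu> x)
        \<le> ennreal (w \<nu> / w \<mu> * (mcyl \<nu> x * dKL M w x \<nu>))"
      using d0 xi_nonneg[of x] by (simp add: d_def ennreal_mult'[symmetric] mcyl_nonneg ennreal_leI)
  qed
  finally show ?thesis .
qed

lemma nn_integral_ct_Suc_le:
  assumes \<mu>: "\<mu> \<in> M"
  shows "(\<integral>\<^sup>+\<omega>. ct M w (Suc t) \<omega> \<partial>\<mu>)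
       \<le> (\<integral>\<^sup>+\<nu>. ennreal (w \<nu> / w \<mu> * (kl_divergence \<nu> (Suc t) - kl_divergence \<nu> t)) \<partial>count_space M)"
proof -
  let ?L = "{x::'a list. length x = t}"
  have "(\<integral>\<^sup>+\<omega>. ct M w (Suc t) \<omega> \<partial>\<mu>)
      = (\<integral>\<^sup>+x. (\<integral>\<^sup>+\<nu>. ennreal (post M w \<nu> x * dKL M w x \<nu>) \<partial>count_space M) * ennreal (mcyl \<mu> x)
          \<partial>count_space ?L)"
    using nn_integral_stake[OF \<mu>, where n = t
        and f = "\<lambda>x. \<integral>\<^sup>+\<nu>. ennreal (post M w \<nu> x * dKL M w x \<nu>) \<partial>count_space M"]
    by (simp add: ct_def)
  also have "\<dots> \<le> (\<integral>\<^sup>+x. \<integral>\<^sup>+\<nu>. ennreal (w \<nu> / w \<mu> * (mcyl \<nu> x * dKL M w x \<nu>))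
                   \<partial>count_space M \<partial>count_space ?L)"
    by (intro nn_integral_mono posterior_dKL_mult_mcyl_le[OF \<mu>])
  also have "\<dots> = (\<integral>\<^sup>+\<nu>. \<integral>\<^sup>+x. ennreal (w \<nu> / w \<mu> * (mcyl \<nu> x * dKL M w x \<nu>))
                   \<partial>count_space ?L \<partial>count_space M)"
    by (rule nn_integral_count_space_nn_integral[OF countM]) simp
  also have "\<dots> = (\<integral>\<^sup>+\<nu>. ennreal (w \<nu> / w \<mu> * (kl_divergence \<nu> (Suc t) - kl_divergence \<nu> t))
                   \<partial>count_space M)"
  proof (rule nn_integral_cong)
    fix \<nu> assume "\<nu> \<in> space (count_space M)"
    hence \<nu>: "\<nu> \<in> M" by simp
    have "0 \<le> w \<nu> / w \<mu>" using w_nonneg[OF \<nu>] w_nonneg[OF \<mu>] by simp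
    thus "(\<integral>\<^sup>+x. ennreal (w \<nu> / w \<mu> * (mcyl \<nu> x * dKL M w x \<nu>)) \<partial>count_space ?L)
        = ennreal (w \<nu> / w \<mu> * (kl_divergence \<nu> (Suc t) - kl_divergence \<nu> t))"
      by (intro nn_integral_count_space_has_sum has_sum_cmult_right kl_divergence_Suc_has_sum \<nu>
          mult_nonneg_nonneg mcyl_mult_dKL_nonneg)
  qed
  finally show ?thesis .
qed

lemma nn_integral_Cinf_le:
  assumes \<mu>: "\<mu> \<in> M" and Ent: "(\<lambda>\<nu>. - (w \<nu> * ln (w \<nu>))) summable_on M"
  shows "(\<integral>\<^sup>+\<omega>. Cinf M w \<omega> \<partial>\<mu>) \<le> ennreal (Ent M w / w \<mu>)"
proof -
  have "(\<integral>\<^sup>+\<omega>. Cinf M w \<omega> \<partial>\<mu>) = (\<Sum>t. \<integral>\<^sup>+\<omega>. ct M w (Suc t) \<omega> \<partial>\<mu>)"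
    unfolding Cinf_def by (intro nn_integral_suminf ct_Suc_measurable[OF \<mu>])
  also have "\<dots> \<le> (\<Sum>t. \<integral>\<^sup>+\<nu>. ennreal (w \<nu> / w \<mu> * (kl_divergence \<nu> (Suc t) - kl_divergence \<nu> t))
                   \<partial>count_space M)"
    by (intro suminf_le summableI nn_integral_ct_Suc_le[OF \<mu>])
  also have "\<dots> = (\<integral>\<^sup>+\<nu>. (\<Sum>t. ennreal (w \<nu> / w \<mu> * (kl_divergence \<nu> (Suc t) - kl_divergence \<nu> t)))
                   \<partial>count_space M)"
    by (rule nn_integral_suminf[symmetric]) simp
  also have "\<dots> \<le> (\<integral>\<^sup>+\<nu>. ennreal (w \<nu> / w \<mu> * (- ln (w \<nu>))) \<partial>count_space M)"
    using w_nonneg[OF \<mu>]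
    by (intro nn_integral_mono suminf_ennreal_telescope_le)
       (auto simp: w_nonneg kl_divergence_0 kl_divergence_le kl_divergence_mono_Suc)
  also have "\<dots> = ennreal (Ent M w / w \<mu>)"
  proof (rule nn_integral_count_space_has_sum)
    show "((\<lambda>\<nu>. w \<nu> / w \<mu> * (- ln (w \<nu>))) has_sum Ent M w / w \<mu>) M"
      using has_sum_cmult_left[OF has_sum_infsum[OF Ent], of "1 / w \<mu>"] by (simp add: Ent_def)
  qed (metis mult_nonneg_nonneg divide_nonneg_nonneg w_nonneg neg_ln_w_nonneg \<mu>)
  finally show ?thesis .
qed

end

theorem theorem4:
  fixes M :: "('a::countable) stream measure set"
    and w :: "'a stream measure \<Rightarrow> real"
    and \<mu> :: "'a stream measure"
  assumes countM: "countable M"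
    and probM: "\<And>\<nu>. \<nu> \<in> M \<Longrightarrow> prob_space \<nu>"
    and setsM: "\<And>\<nu>. \<nu> \<in> M \<Longrightarrow> sets \<nu> = sets (stream_space (count_space UNIV))"
    and wpos: "\<And>\<nu>. \<nu> \<in> M \<Longrightarrow> 0 < w \<nu> \<and> w \<nu> \<le> 1"
    and wsum: "(w has_sum 1) M"
    and muM: "\<mu> \<in> M"
    and Entfin: "(\<lambda>\<nu>. - (w \<nu> * ln (w \<nu>))) summable_on M"
  shows "(\<integral>\<^sup>+ \<omega>. Cinf M w \<omega> \<partial>\<mu>) \<le> ennreal (Ent M w / w \<mu>) \<and>
         (AE \<omega> in \<mu>. (\<lambda>t. ct M w t \<omega>) \<longlonglongrightarrow> 0)"
proof -
  interpret bayes_mixture M w by (rule bayes_mixture.intro[OF countM probM setsM wpos wsum])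
  have bound: "(\<integral>\<^sup>+\<omega>. Cinf M w \<omega> \<partial>\<mu>) \<le> ennreal (Ent M w / w \<mu>)"
    by (rule nn_integral_Cinf_le[OF muM Entfin])
  hence "(\<integral>\<^sup>+\<omega>. Cinf M w \<omega> \<partial>\<mu>) \<noteq> \<infinity>"
    by (metis ennreal_less_top infinity_ennreal_def le_less_trans less_irrefl)
  hence "AE \<omega> in \<mu>. Cinf M w \<omega> \<noteq> \<infinity>"
    by (rule nn_integral_noteq_infinite[OF Cinf_measurable[OF muM]])
  hence "AE \<omega> in \<mu>. (\<lambda>t. ct M w t \<omega>) \<longlonglongrightarrow> 0"
  proof (rule eventually_mono)
    fix \<omega> assume "Cinf M w \<omega> \<noteq> \<infinity>"
    hence "(\<lambda>t. ct M w (Suc t) \<omega>) \<longlonglongrightarrow> 0"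
      unfolding Cinf_def by (rule ennreal_suminf_finite_imp_LIMSEQ_zero)
    thus "(\<lambda>t. ct M w t \<omega>) \<longlonglongrightarrow> 0" by (rule LIMSEQ_imp_Suc)
  qed
  with bound show ?thesis by blast
qed

end
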